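(* Let $F\subseteq E(H)$ with $|F|=\ell$, and let $X\subseteq V$ be a cut with $S_i\subseteq X$ and $T_i\subseteq V\setminus X$ for some $i\in[q]$. If $X$ is intact with respect to $F$, then $\tilde x(\delta_G(X)\setminus F)\ge 3/4$.
   Context: Standing setup. $G=(V,E)$ is an undirected graph with $n=|V|$, demand-pairs $(S_i,T_i)$, $i\in[q]$, of subsets of $V$. $\ell\ge1$ is an integer and $E_\ell\subseteq E$ an edge set such that in $(V,E_\ell)$ every $(S_i,T_i)$ is $\ell$-edge-connected. $x:E\to[0,1]$ satisfies $x_e=1$ for $e\in E_\ell$ and $\sum_{e\in\delta_G(X)}x_e\ge \ell+1$ for every $i\in[q]$ and every $X$ with $T_i\subseteq X\subseteq V\setminus S_i$ (here $\delta_G(X)$ is the set of edges of $G$ with exactly one endpoint in $X$, and $x(F)=\sum_{e\in F}x_e$). $\beta\ge1$ is a real. $\mathsf{LARGE}=\{e: x_e\ge 1/(4\ell\beta)\}$, $\mathsf{SMALL}=E\setminus\mathsf{LARGE}$, and $H=(V,\mathsf{LARGE})$. Capacities: $\tilde x_e=1/(4\ell\beta)$ if $e\in\mathsf{LARGE}$; $\tilde x_e=0$ if $x_e<\frac{1}{2n^2}\cdot\frac1{4\ell\beta}$; $\tilde x_e=x_e$ otherwise. $\mathbb Q^F$ is the set of vertex sets of connected components of $(V,E(H)\setminus F)$. A cut $X\subseteq V$ is shattered (w.r.t. $F$) if some $Q\in\mathbb Q^F$ satisfies $Q\cap X\neq\emptyset$ and $Q\cap(V\setminus X)\neq\emptyset$;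 otherwise $X$ is intact. *)

theory Defs
  imports Complex_Main
begin

definition simple_graph :: "'v set \<Rightarrow> 'v set set \<Rightarrow> bool" where
  "simple_graph V E \<longleftrightarrow> finite V \<and> (\<forall>e\<in>E. e \<subseteq> V \<and> card e = 2)"

definition cut_edges :: "'v set set \<Rightarrow> 'v set \<Rightarrow> 'v set set" where
  "cut_edges E X = {e \<in> E. e \<inter> X \<noteq> {} \<and> e - X \<noteq> {}}"

definition pair_edge_conn :: "'v set \<Rightarrow> 'v set set \<Rightarrow> 'v set \<Rightarrow> 'v set \<Rightarrow> nat \<Rightarrow> bool" where
  "pair_edge_conn V E S T l \<longleftrightarrow>
     (\<forall>X. T \<subseteq> X \<and> X \<subseteq> V - S \<longrightarrow> card (cut_edges E X) \<ge> l)"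

definition LARGE :: "'v set set \<Rightarrow> ('v set \<Rightarrow> real) \<Rightarrow> nat \<Rightarrow> real \<Rightarrow> 'v set set" where
  "LARGE E x l \<beta> = {e \<in> E. x e \<ge> 1 / (4 * real l * \<beta>)}"

definition SMALL :: "'v set set \<Rightarrow> ('v set \<Rightarrow> real) \<Rightarrow> nat \<Rightarrow> real \<Rightarrow> 'v set set" where
  "SMALL E x l \<beta> = E - LARGE E x l \<beta>"

definition xtilde :: "'v set \<Rightarrow> 'v set set \<Rightarrow> ('v set \<Rightarrow> real) \<Rightarrow> nat \<Rightarrow> real \<Rightarrow> 'v set \<Rightarrow> real" where
  "xtilde V E x l \<beta> e =
     (if e \<in> LARGE E x l \<beta> then 1 / (4 * real l * \<beta>)
      else if x e < (1 / (2 * real (card V) ^ 2)) * (1 / (4 * real l * \<beta>)) then 0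
      else x e)"

definition adj :: "'v set set \<Rightarrow> ('v \<times> 'v) set" where
  "adj A = {(u, v). {u, v} \<in> A}"

definition components :: "'v set \<Rightarrow> 'v set set \<Rightarrow> 'v set set" where
  "components V A = V // {(u, v). u \<in> V \<and> v \<in> V \<and> (u, v) \<in> (adj A)\<^sup>*}"

definition shattered :: "'v set \<Rightarrow> 'v set set \<Rightarrow> 'v set set \<Rightarrow> 'v set \<Rightarrow> bool" where
  "shattered V EH F X \<longleftrightarrow>
     (\<exists>Q \<in> components V (EH - F). Q \<inter> X \<noteq> {} \<and> Q \<inter> (V - X) \<noteq> {})"

definition intact :: "'v set \<Rightarrow> 'v set set \<Rightarrow> 'v set set \<Rightarrow> 'v set \<Rightarrow> bool" where
  "intact V EH F X \<longleftrightarrow> \<not> shattered V EH F X"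

end

theory Submission
  imports Defs
begin

text \<open>Intactness means no edge of \<open>H - F\<close> crosses \<open>X\<close>, so the edges of \<open>\<delta>(X) - F\<close> are all
SMALL. Since \<open>X\<close> separates \<open>S\<^sub>i\<close> from \<open>T\<^sub>i\<close>, \<open>x(\<delta>(X)) \<ge> \<ell> + 1\<close>, and removing the \<open>\<ell>\<close> edges
of \<open>F\<close> (each of value at most 1) leaves \<open>x(\<delta>(X) - F) \<ge> 1\<close>. Rounding small values to 0 loses
less than \<open>c/(2n\<^sup>2)\<close> per edge, with \<open>c = 1/(4\<ell>\<beta>) \<le> 1/4\<close>, and there are at most \<open>n\<^sup>2\<close>
edges, so the total loss is at most \<open>1/8\<close>.\<close>

lemma simple_graph_finite_edges:
  assumes "simple_graph V E"
  shows "finite E"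
proof -
  have "E \<subseteq> Pow V" using assms by (auto simp: simple_graph_def)
  then show ?thesis using assms finite_subset by (auto simp: simple_graph_def)
qed

lemma simple_graph_card_edges_le:
  assumes "simple_graph V E"
  shows "card E \<le> card V ^ 2"
proof -
  have finV: "finite V" and E: "E \<subseteq> {B. B \<subseteq> V \<and> card B = 2}"
    using assms by (auto simp: simple_graph_def)
  have "card E \<le> card V choose 2"
    using card_mono[OF _ E] finV n_subsets[OF finV, of 2] by auto
  also have "\<dots> \<le> card V ^ 2"
    by (cases "2 \<le> card V") (auto intro: binomial_le_pow simp: binomial_eq_0)
  finally show ?thesis .
qed

lemma cut_edges_Diff:
  assumes "\<forall>e\<in>E. e \<subseteq> V"
  shows "cut_edges E (V - X) = cut_edges E X"
  using assms by (auto simp: cut_edges_def)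

lemma cut_edges_subset_eq: "B \<subseteq> A \<Longrightarrow> cut_edges B X = cut_edges A X \<inter> B"
  by (auto simp: cut_edges_def)

lemma shattered_if_crossing_edge:
  assumes "{u, v} \<in> A - F" "u \<in> V" "v \<in> V" "u \<in> X" "v \<notin> X"
  shows "shattered V A F X"
proof -
  define R where "R = {(u, v). u \<in> V \<and> v \<in> V \<and> (u, v) \<in> (adj (A - F))\<^sup>*}"
  have "R `` {u} \<in> components V (A - F)"
    unfolding components_def R_def[symmetric] using assms(2) by (rule quotientI)
  moreover have "u \<in> R `` {u}" "v \<in> R `` {u}"
    using assms(1-3) by (auto simp: R_def adj_def)
  ultimately show ?thesis
    unfolding shattered_def using assms(3-5) by blast
qed

lemma intact_cut_edges_subset:
  assumes "intact V A F X" and "\<forall>e\<in>A. e \<subseteq> V \<and> card e = 2"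
  shows "cut_edges A X \<subseteq> F"
proof
  fix e assume e: "e \<in> cut_edges A X"
  show "e \<in> F"
  proof (rule ccontr)
    assume "e \<notin> F"
    from e obtain u v where uv: "u \<in> e" "u \<in> X" "v \<in> e" "v \<notin> X" "e \<in> A"
      by (auto simp: cut_edges_def)
    then have "e \<subseteq> V" "card e = 2" using assms(2) by auto
    with uv have "e = {u, v}" "u \<in> V" "v \<in> V" by (auto simp: card_2_iff)
    with uv \<open>e \<notin> F\<close> have "shattered V A F X"
      by (intro shattered_if_crossing_edge) auto
    with assms(1) show False by (simp add: intact_def)
  qed
qed

lemma sum_Diff_ge_sum_minus_card:
  fixes x :: "'a \<Rightarrow> real"
  assumes "finite D" "finite F" "\<forall>e\<in>D. x e \<le> 1"
  shows "(\<Sum>e\<in>D. x e) - card F \<le> (\<Sum>e\<in>D - F. x e)"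
proof -
  have "(\<Sum>e\<in>D \<inter> F. x e) \<le> card (D \<inter> F)"
    using sum_mono[of "D \<inter> F" x "\<lambda>_. 1"] assms(3) by auto
  also have "\<dots> \<le> card F" using card_mono[OF assms(2)] by auto
  finally have "(\<Sum>e\<in>D \<inter> F. x e) \<le> card F" .
  moreover have "(\<Sum>e\<in>D. x e) = (\<Sum>e\<in>D - F. x e) + (\<Sum>e\<in>D \<inter> F. x e)"
    using sum.subset_diff[of "D \<inter> F" D x] assms(1) by (simp add: Diff_Int)
  ultimately show ?thesis by linarith
qed

lemma sum_xtilde_ge_on_small:
  assumes G: "simple_graph V E" and l: "l \<ge> 1" and \<beta>: "\<beta> \<ge> 1"
    and D: "D \<subseteq> E" "D \<inter> LARGE E x l \<beta> = {}"
  shows "(\<Sum>e\<in>D. x e) - 1 / 4 \<le> (\<Sum>e\<in>D. xtilde V E x l \<beta> e)"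
proof -
  define c where "c = 1 / (4 * real l * \<beta>)"
  define thr where "thr = 1 / (2 * real (card V) ^ 2) * c"
  have "1 \<le> real l * \<beta>" using l \<beta> by (metis mult_mono' of_nat_1 of_nat_0_le_iff
        of_nat_mono mult_1_left zero_le_one)
  then have c: "0 \<le> c" "c \<le> 1 / 4" by (auto simp: c_def field_simps)
  then have thr0: "0 \<le> thr" by (simp add: thr_def)
  \<comment> \<open>a small edge is rounded down to 0 only when its value is below \<open>thr\<close>\<close>
  have "x e - thr \<le> xtilde V E x l \<beta> e" if "e \<in> D" for e
    using that D(2) thr0 unfolding xtilde_def c_def thr_def by auto
  then have "(\<Sum>e\<in>D. x e) - card D * thr \<le> (\<Sum>e\<in>D. xtilde V E x l \<beta> e)"
    using sum_mono[of D "\<lambda>e. x e - thr"] by (simp add: sum_subtractf)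
  moreover have "card D * thr \<le> 1 / 4"
  proof -
    have "card D \<le> card V ^ 2"
      using card_mono[OF simple_graph_finite_edges[OF G] D(1)] simple_graph_card_edges_le[OF G]
      by linarith
    then have "card D * thr \<le> real (card V) ^ 2 * thr"
      by (intro mult_right_mono thr0) (metis of_nat_le_iff of_nat_power)
    also have "\<dots> \<le> c / 2" using c by (cases "card V = 0") (auto simp: thr_def)
    finally show ?thesis using c by linarith
  qed
  ultimately show ?thesis by linarith
qed

theorem lemma5p7:
  fixes V :: "'v set" and E El :: "'v set set" and S T :: "nat \<Rightarrow> 'v set"
    and q l :: nat and x :: "'v set \<Rightarrow> real" and \<beta> :: real
    and F :: "'v set set" and X :: "'v set" and i :: nat
  assumes G: "simple_graph V E"
    and ST: "\<forall>j\<in>{1..q}. S j \<subseteq> V \<and> T j \<subseteq> V"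
    and l: "l \<ge> 1"
    and El: "El \<subseteq> E"
    and Elconn: "\<forall>j\<in>{1..q}. pair_edge_conn V El (S j) (T j) l"
    and x01: "\<forall>e\<in>E. 0 \<le> x e \<and> x e \<le> 1"
    and xEl: "\<forall>e\<in>El. x e = 1"
    and xcut: "\<forall>j\<in>{1..q}. \<forall>Y. T j \<subseteq> Y \<and> Y \<subseteq> V - S j \<longrightarrow>
                 (\<Sum>e\<in>cut_edges E Y. x e) \<ge> real l + 1"
    and \<beta>: "\<beta> \<ge> 1"
    and F: "F \<subseteq> LARGE E x l \<beta>" "card F = l"
    and X: "X \<subseteq> V" "i \<in> {1..q}" "S i \<subseteq> X" "T i \<subseteq> V - X"
    and int: "intact V (LARGE E x l \<beta>) F X"
  shows "(\<Sum>e\<in>cut_edges E X - F. xtilde V E x l \<beta> e) \<ge> 3 / 4"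
proof -
  let ?D = "cut_edges E X"
  have Esub: "\<forall>e\<in>E. e \<subseteq> V \<and> card e = 2" using G by (simp add: simple_graph_def)
  have D: "?D \<subseteq> E" by (auto simp: cut_edges_def)
  have "cut_edges (LARGE E x l \<beta>) X = ?D \<inter> LARGE E x l \<beta>"
    by (rule cut_edges_subset_eq) (auto simp: LARGE_def)
  moreover have "cut_edges (LARGE E x l \<beta>) X \<subseteq> F"
    using intact_cut_edges_subset[OF int] Esub by (auto simp: LARGE_def)
  ultimately have small: "(?D - F) \<inter> LARGE E x l \<beta> = {}" by auto
  have "T i \<subseteq> V - X \<and> V - X \<subseteq> V - S i" using X by auto
  then have "real l + 1 \<le> (\<Sum>e\<in>cut_edges E (V - X). x e)" using xcut X(2) by blast
  then have "real l + 1 \<le> (\<Sum>e\<in>?D. x e)" using Esub by (simp add: cut_edges_Diff)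
  moreover have "finite ?D" using finite_subset[OF D simple_graph_finite_edges[OF G]] .
  moreover have "finite F" using F(2) l by (intro card_ge_0_finite) simp
  moreover have "\<forall>e\<in>?D. x e \<le> 1" using x01 D by blast
  ultimately have "real l + 1 - card F \<le> (\<Sum>e\<in>?D - F. x e)"
    using sum_Diff_ge_sum_minus_card[of ?D F x] by linarith
  moreover have "(\<Sum>e\<in>?D - F. x e) - 1 / 4 \<le> (\<Sum>e\<in>?D - F. xtilde V E x l \<beta> e)"
    using D small by (intro sum_xtilde_ge_on_small[OF G l \<beta>]) auto
  ultimately show ?thesis using F(2) by linarith
qed

end
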